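(* Let $X,Y$ be random vectors in $\mathbb{R}^m,\mathbb{R}^n$, $\mu,\nu$ finite symmetric Lévy measures on $\mathbb{R}^m\setminus\{0\}$, $\mathbb{R}^n\setminus\{0\}$ with full support, $\Phi(x)=\int(1-\cos\langle x,s\rangle)\mu(ds)$, $\Psi(y)=\int(1-\cos\langle y,t\rangle)\nu(dt)$, and let $(X_i,Y_i)$, $i=1,\dots,4$, be i.i.d. copies of $(X,Y)$. Then \begin{align*} V^2(X,Y)&=\mathbb{E}\Phi(X_1-X_4)\Psi(Y_1-Y_4)-2\mathbb{E}\Phi(X_1-X_2)\Psi(Y_1-Y_3)+\mathbb{E}\Phi(X_1-X_2)\,\mathbb{E}\Psi(Y_3-Y_4)\\ &=\mathbb{E}\big[\Phi(X_1-X_4)\{\Psi(Y_1-Y_4)-2\Psi(Y_1-Y_3)+\Psi(Y_2-Y_3)\}\big]\\ &=\mathbb{E}\big[\{\Phi(X_1-X_4)-\Phi(X_4-X_2)\}\{\Psi(Y_4-Y_1)-\Psi(Y_1-Y_3)\}\big]\\ &=\mathbb{E}\big[\{\Phi(X_1-X_4)-\mathbb{E}(\Phi(X_4-X_1)\mid X_4)\}\{\Psi(Y_4-Y_1)-\mathbb{E}(\Psi(Y_1-Y_4)\mid Y_1)\}\big]. \end{align*}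
   Context: Symmetric Lévy measure on $\mathbb{R}^d\setminus\{0\}$: $\rho(B)=\rho(-B)$ and $\int(1\wedge|r|^2)\rho(dr)<\infty$; full support: positive mass on every nonempty open subset. $V^2(X,Y)=\iint|f_{(X,Y)}(s,t)-f_X(s)f_Y(t)|^2\,\mu(ds)\,\nu(dt)$, $f$ denoting characteristic functions. *)

theory Defs
  imports "HOL-Probability.Probability"
begin

definition finite_sym_levy_full :: "('d::euclidean_space) measure \<Rightarrow> bool" where
  "finite_sym_levy_full \<rho> \<longleftrightarrow>
     sets \<rho> = sets borel \<and>
     finite_measure \<rho> \<and>
     emeasure \<rho> {0} = 0 \<and>
     (\<forall>B\<in>sets borel. emeasure \<rho> B = emeasure \<rho> (uminus ` B)) \<and>
     (\<integral>\<^sup>+ r. ennreal (min 1 (norm r ^ 2)) \<partial>\<rho>) < \<infinity> \<and>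
     (\<forall>U. open U \<and> U \<noteq> {} \<and> 0 \<notin> U \<longrightarrow> emeasure \<rho> U > 0)"

definition char_fn :: "'w measure \<Rightarrow> ('w \<Rightarrow> 'd::euclidean_space) \<Rightarrow> 'd \<Rightarrow> complex" where
  "char_fn M X s = (\<integral>\<omega>. cis (s \<bullet> X \<omega>) \<partial>M)"

definition joint_char_fn :: "'w measure \<Rightarrow> ('w \<Rightarrow> 'a::euclidean_space) \<Rightarrow> ('w \<Rightarrow> 'b::euclidean_space)
     \<Rightarrow> 'a \<Rightarrow> 'b \<Rightarrow> complex" where
  "joint_char_fn M X Y s t = (\<integral>\<omega>. cis (s \<bullet> X \<omega> + t \<bullet> Y \<omega>) \<partial>M)"

definition dcov2 :: "'a measure \<Rightarrow> 'b measure \<Rightarrow> 'w measure \<Rightarrow> ('w \<Rightarrow> 'a::euclidean_space)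
     \<Rightarrow> ('w \<Rightarrow> 'b::euclidean_space) \<Rightarrow> real" where
  "dcov2 \<mu> \<nu> M X Y = (\<integral>(s,t). (cmod (joint_char_fn M X Y s t - char_fn M X s * char_fn M Y t))^2 \<partial>(\<mu> \<Otimes>\<^sub>M \<nu>))"

definition levy_cf_exp :: "'d measure \<Rightarrow> 'd::euclidean_space \<Rightarrow> real" where
  "levy_cf_exp \<mu> x = (\<integral>s. 1 - cos (x \<bullet> s) \<partial>\<mu>)"

end

theory Submission
  imports Defs
begin

(*
  Expanding the square, |f_XY(s,t) - f_X(s) f_Y(t)|^2 is the real part of
  E e^{i(<s,X1-X4> + <t,Y1-Y4>)} - 2 E e^{i(<s,X1-X2> + <t,Y1-Y3>)} + E e^{i(<s,X1-X2> + <t,Y3-Y4>)}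
  for independent copies (X_i, Y_i).  Since mu and nu are symmetric, integrating cos(<s,x> + <t,y>)
  against mu x nu gives (mu(R^m) - Phi x)(nu(R^n) - Psi y); by Fubini the total masses cancel
  (the coefficients are 1, -2, 1) and the first identity remains.  The others follow by comparing
  instances of it for different choices of indices, and by integrating out a single copy, which
  replaces Phi(x - X_k) by Phi_avg x = E Phi(x - X); in particular E(Phi(X4 - X1) | X4) = Phi_avg X4.
*)

lemma finite_sym_levy_fullD:
  assumes "finite_sym_levy_full (\<rho>::'d::euclidean_space measure)"
  shows "finite_measure \<rho>" "sets \<rho> = sets borel" "space \<rho> = UNIV"
    "borel_measurable \<rho> = borel_measurable borel"
proof -
  show sets: "sets \<rho> = sets borel" and "finite_measure \<rho>"
    using assms unfolding finite_sym_levy_full_def by blast+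
  show "space \<rho> = UNIV" using sets_eq_imp_space_eq[OF sets] by simp
  show "borel_measurable \<rho> = borel_measurable borel" by (rule measurable_cong_sets[OF sets refl])
qed

lemma integrable_cos_inner_finite_sym_levy_full:
  assumes "finite_sym_levy_full (\<rho>::'d::euclidean_space measure)"
  shows "integrable \<rho> (\<lambda>s. cos (x \<bullet> s))" "integrable \<rho> (\<lambda>s. sin (x \<bullet> s))"
proof -
  interpret finite_measure \<rho> using finite_sym_levy_fullD[OF assms] by simp
  show "integrable \<rho> (\<lambda>s. cos (x \<bullet> s))" "integrable \<rho> (\<lambda>s. sin (x \<bullet> s))"
    by (auto intro!: integrable_const_bound[where B=1] simp: finite_sym_levy_fullD[OF assms])
qed

lemma distr_uminus_finite_sym_levy_full:
  assumes "finite_sym_levy_full (\<rho>::'d::euclidean_space measure)"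
  shows "distr \<rho> borel uminus = \<rho>"
proof (rule measure_eqI)
  note \<rho> = finite_sym_levy_fullD[OF assms]
  show "sets (distr \<rho> borel uminus) = sets \<rho>" using \<rho> by simp
  fix A assume "A \<in> sets (distr \<rho> borel uminus)"
  then have A: "A \<in> sets borel" by simp
  have "uminus -` A \<inter> space \<rho> = uminus ` A"
    using \<rho> by (auto intro: rev_image_eqI[where x="- _"])
  then have "emeasure (distr \<rho> borel uminus) A = emeasure \<rho> (uminus ` A)"
    using A \<rho> by (simp add: emeasure_distr)
  also have "\<dots> = emeasure \<rho> A"
    using assms A unfolding finite_sym_levy_full_def by metis
  finally show "emeasure (distr \<rho> borel uminus) A = emeasure \<rho> A" .
qed

lemma integral_sin_inner_finite_sym_levy_full:
  assumes "finite_sym_levy_full (\<rho>::'d::euclidean_space measure)"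
  shows "(\<integral>s. sin (x \<bullet> s) \<partial>\<rho>) = 0"
proof -
  note \<rho> = finite_sym_levy_fullD[OF assms]
  have "(\<integral>s. sin (x \<bullet> s) \<partial>\<rho>) = (\<integral>s. sin (x \<bullet> s) \<partial>distr \<rho> borel uminus)"
    using distr_uminus_finite_sym_levy_full[OF assms] by simp
  also have "\<dots> = - (\<integral>s. sin (x \<bullet> s) \<partial>\<rho>)"
    using \<rho> by (subst integral_distr) auto
  finally show ?thesis by simp
qed

lemma levy_cf_exp_eq:
  assumes "finite_sym_levy_full (\<rho>::'d::euclidean_space measure)"
  shows "levy_cf_exp \<rho> x = measure \<rho> UNIV - (\<integral>s. cos (x \<bullet> s) \<partial>\<rho>)"
proof -
  interpret finite_measure \<rho> using finite_sym_levy_fullD[OF assms] by simp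
  show ?thesis
    using integrable_cos_inner_finite_sym_levy_full[OF assms] finite_sym_levy_fullD[OF assms]
    unfolding levy_cf_exp_def by simp
qed

lemma levy_cf_exp_nonneg: "0 \<le> levy_cf_exp \<rho> x"
  unfolding levy_cf_exp_def by (rule integral_nonneg_AE) auto

lemma levy_cf_exp_le:
  assumes "finite_sym_levy_full (\<rho>::'d::euclidean_space measure)"
  shows "levy_cf_exp \<rho> x \<le> 2 * measure \<rho> UNIV"
proof -
  interpret finite_measure \<rho> using finite_sym_levy_fullD[OF assms] by simp
  have "- measure \<rho> UNIV \<le> (\<integral>s. cos (x \<bullet> s) \<partial>\<rho>)"
    using integral_mono[OF integrable_const integrable_cos_inner_finite_sym_levy_full(1)[OF assms],
        of "-1" x] finite_sym_levy_fullD[OF assms] by simp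
  then show ?thesis using levy_cf_exp_eq[OF assms, of x] by linarith
qed

lemma levy_cf_exp_minus: "levy_cf_exp \<rho> (- x) = levy_cf_exp \<rho> x"
  unfolding levy_cf_exp_def by simp

lemma levy_cf_exp_commute: "levy_cf_exp \<rho> (a - b) = levy_cf_exp \<rho> (b - a)"
  using levy_cf_exp_minus[of \<rho> "b - a"] by simp

lemma borel_measurable_levy_cf_exp:
  assumes "finite_sym_levy_full (\<rho>::'d::euclidean_space measure)"
  shows "levy_cf_exp \<rho> \<in> borel_measurable borel"
proof -
  note \<rho> = finite_sym_levy_fullD[OF assms]
  interpret finite_measure \<rho> using \<rho> by simp
  have eq: "borel_measurable (borel \<Otimes>\<^sub>M \<rho>) = borel_measurable (borel \<Otimes>\<^sub>M (borel::'d measure))"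
    by (rule measurable_cong_sets) (simp_all add: \<rho>)
  have "(\<lambda>(x, s). 1 - cos (x \<bullet> s)) \<in> borel_measurable (borel \<Otimes>\<^sub>M \<rho>)"
    unfolding eq by measurable
  from borel_measurable_lebesgue_integral[OF this] show ?thesis
    unfolding levy_cf_exp_def[abs_def] by simp
qed

lemma integral_cos_inner_pair_measure:
  fixes \<mu> :: "'m::euclidean_space measure" and \<nu> :: "'n::euclidean_space measure"
  assumes \<mu>: "finite_sym_levy_full \<mu>" and \<nu>: "finite_sym_levy_full \<nu>"
  shows "(\<integral>(s, t). cos (s \<bullet> x + t \<bullet> y) \<partial>(\<mu> \<Otimes>\<^sub>M \<nu>)) =
    (measure \<mu> UNIV - levy_cf_exp \<mu> x) * (measure \<nu> UNIV - levy_cf_exp \<nu> y)"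
proof -
  note \<mu>' = finite_sym_levy_fullD[OF \<mu>] and \<nu>' = finite_sym_levy_fullD[OF \<nu>]
  interpret \<mu>\<nu>: pair_sigma_finite \<mu> \<nu>
    using \<mu>' \<nu>' by (intro pair_sigma_finite.intro finite_measure.sigma_finite_measure)
  interpret finite_measure "\<mu> \<Otimes>\<^sub>M \<nu>" by (rule finite_measure_pair_measure[OF \<nu>'(1) \<mu>'(1)])
  have eq: "borel_measurable (\<mu> \<Otimes>\<^sub>M \<nu>) = borel_measurable (borel \<Otimes>\<^sub>M borel)"
    by (rule measurable_cong_sets) (simp_all add: \<mu>' \<nu>')
  have "integrable (\<mu> \<Otimes>\<^sub>M \<nu>) (\<lambda>(s, t). cos (s \<bullet> x + t \<bullet> y))"
  proof (rule integrable_const_bound[where B=1])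
    show "(\<lambda>(s, t). cos (s \<bullet> x + t \<bullet> y)) \<in> borel_measurable (\<mu> \<Otimes>\<^sub>M \<nu>)"
      unfolding eq by measurable
  qed (simp add: split_beta')
  then have "(\<integral>(s, t). cos (s \<bullet> x + t \<bullet> y) \<partial>(\<mu> \<Otimes>\<^sub>M \<nu>)) =
      (\<integral>s. (\<integral>t. cos (s \<bullet> x + t \<bullet> y) \<partial>\<nu>) \<partial>\<mu>)"
    by (simp add: \<mu>\<nu>.integral_fst'[symmetric] split_beta')
  also have "\<dots> = (\<integral>s. cos (x \<bullet> s) * (\<integral>t. cos (y \<bullet> t) \<partial>\<nu>) \<partial>\<mu>)"
  proof -
    have "cos (s \<bullet> x + t \<bullet> y) = cos (x \<bullet> s) * cos (y \<bullet> t) - sin (x \<bullet> s) * sin (y \<bullet> t)" for s t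
      by (simp add: cos_add inner_commute)
    then show ?thesis
      using integrable_cos_inner_finite_sym_levy_full[OF \<nu>] integral_sin_inner_finite_sym_levy_full[OF \<nu>]
      by simp
  qed
  also have "\<dots> = (measure \<mu> UNIV - levy_cf_exp \<mu> x) * (measure \<nu> UNIV - levy_cf_exp \<nu> y)"
    by (simp add: levy_cf_exp_eq[OF \<mu>] levy_cf_exp_eq[OF \<nu>])
  finally show ?thesis .
qed

lemma
  fixes \<mu> :: "'m::euclidean_space measure" and \<nu> :: "'n::euclidean_space measure"
    and A :: "'w \<Rightarrow> 'm" and B :: "'w \<Rightarrow> 'n"
  assumes \<mu>: "finite_sym_levy_full \<mu>" and \<nu>: "finite_sym_levy_full \<nu>" and M: "finite_measure M"
    and [measurable]: "A \<in> borel_measurable M" "B \<in> borel_measurable M"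
  shows integrable_expectation_cos_inner_pair_measure:
      "integrable (\<mu> \<Otimes>\<^sub>M \<nu>) (\<lambda>(s, t). \<integral>\<omega>. cos (s \<bullet> A \<omega> + t \<bullet> B \<omega>) \<partial>M)"
    and integral_expectation_cos_inner_pair_measure:
      "(\<integral>(s, t). (\<integral>\<omega>. cos (s \<bullet> A \<omega> + t \<bullet> B \<omega>) \<partial>M) \<partial>(\<mu> \<Otimes>\<^sub>M \<nu>)) =
       (\<integral>\<omega>. (measure \<mu> UNIV - levy_cf_exp \<mu> (A \<omega>)) * (measure \<nu> UNIV - levy_cf_exp \<nu> (B \<omega>)) \<partial>M)"
proof -
  note \<mu>' = finite_sym_levy_fullD[OF \<mu>] and \<nu>' = finite_sym_levy_fullD[OF \<nu>]
  interpret \<mu>\<nu>: finite_measure "\<mu> \<Otimes>\<^sub>M \<nu>" by (rule finite_measure_pair_measure[OF \<nu>'(1) \<mu>'(1)])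
  interpret M: finite_measure M by (rule M)
  interpret \<mu>\<nu>M: pair_sigma_finite "\<mu> \<Otimes>\<^sub>M \<nu>" M by unfold_locales
  interpret finite_measure "(\<mu> \<Otimes>\<^sub>M \<nu>) \<Otimes>\<^sub>M M"
    by (rule finite_measure_pair_measure) unfold_locales
  let ?f = "\<lambda>(p, \<omega>). cos (fst p \<bullet> A \<omega> + snd p \<bullet> B \<omega>)"
  have eq: "borel_measurable ((\<mu> \<Otimes>\<^sub>M \<nu>) \<Otimes>\<^sub>M M) = borel_measurable ((borel \<Otimes>\<^sub>M borel) \<Otimes>\<^sub>M M)"
    by (rule measurable_cong_sets) (simp_all add: \<mu>' \<nu>')
  have f: "integrable ((\<mu> \<Otimes>\<^sub>M \<nu>) \<Otimes>\<^sub>M M) ?f"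
  proof (rule integrable_const_bound[where B=1])
    show "?f \<in> borel_measurable ((\<mu> \<Otimes>\<^sub>M \<nu>) \<Otimes>\<^sub>M M)"
      unfolding eq by measurable
  qed (simp add: split_beta')
  from \<mu>\<nu>M.integrable_fst'[OF f]
  show "integrable (\<mu> \<Otimes>\<^sub>M \<nu>) (\<lambda>(s, t). \<integral>\<omega>. cos (s \<bullet> A \<omega> + t \<bullet> B \<omega>) \<partial>M)"
    by (simp add: split_beta')
  have "(\<integral>(s, t). (\<integral>\<omega>. cos (s \<bullet> A \<omega> + t \<bullet> B \<omega>) \<partial>M) \<partial>(\<mu> \<Otimes>\<^sub>M \<nu>)) =
      (\<integral>\<omega>. (\<integral>(s, t). cos (s \<bullet> A \<omega> + t \<bullet> B \<omega>) \<partial>(\<mu> \<Otimes>\<^sub>M \<nu>)) \<partial>M)"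
    using \<mu>\<nu>M.Fubini_integral[of "\<lambda>p \<omega>. cos (fst p \<bullet> A \<omega> + snd p \<bullet> B \<omega>)"] f
    by (simp add: split_beta')
  then show "(\<integral>(s, t). (\<integral>\<omega>. cos (s \<bullet> A \<omega> + t \<bullet> B \<omega>) \<partial>M) \<partial>(\<mu> \<Otimes>\<^sub>M \<nu>)) =
       (\<integral>\<omega>. (measure \<mu> UNIV - levy_cf_exp \<mu> (A \<omega>)) * (measure \<nu> UNIV - levy_cf_exp \<nu> (B \<omega>)) \<partial>M)"
    by (simp add: integral_cos_inner_pair_measure[OF \<mu> \<nu>])
qed

lemma cis_sum: "finite I \<Longrightarrow> cis (\<Sum>i\<in>I. f i) = (\<Prod>i\<in>I. cis (f i))"
  by (simp add: cis_conv_exp sum_distrib_left exp_sum)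

lemma integral_cis_uminus: "(\<integral>\<omega>. cis (- f \<omega>) \<partial>M) = cnj (\<integral>\<omega>. cis (f \<omega>) \<partial>M)"
  by (simp flip: cis_cnj)

lemma (in prob_space) sigma_finite_subalgebra_vimage_algebra:
  assumes "U \<in> measurable M T"
  shows "sigma_finite_subalgebra M (vimage_algebra (space M) U T)"
proof -
  have "subalgebra M (vimage_algebra (space M) U T)"
    unfolding subalgebra_def using sets_image_in_sets[OF refl assms] by simp
  then show ?thesis
    by (intro finite_measure_subalgebra_is_sigma_finite finite_measure_subalgebra.intro
        finite_measure_subalgebra_axioms.intro) unfold_locales
qed

lemma (in prob_space) integral_indep_var_eq_iterated:
  fixes f :: "'x \<times> 'x \<Rightarrow> real"
  assumes ind: "indep_var T1 U T2 V" and f[measurable]: "f \<in> borel_measurable (T1 \<Otimes>\<^sub>M T2)"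
    and f_bounded: "\<And>p. \<bar>f p\<bar> \<le> c"
  shows "(\<integral>\<omega>. f (U \<omega>, V \<omega>) \<partial>M) = (\<integral>\<omega>. (\<integral>\<omega>'. f (U \<omega>, V \<omega>') \<partial>M) \<partial>M)"
proof -
  have U[measurable]: "random_variable T1 U" and [measurable]: "random_variable T2 V"
    and joint: "distr M T1 U \<Otimes>\<^sub>M distr M T2 V = distr M (T1 \<Otimes>\<^sub>M T2) (\<lambda>x. (U x, V x))"
    using ind indep_var_distribution_eq by blast+
  interpret U: prob_space "distr M T1 U" by (rule prob_space_distr) simp
  interpret V: prob_space "distr M T2 V" by (rule prob_space_distr) simp
  interpret UV: pair_prob_space "distr M T1 U" "distr M T2 V" ..
  have f_int: "integrable (distr M T1 U \<Otimes>\<^sub>M distr M T2 V) f"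
    by (rule UV.P.integrable_const_bound[where B=c]) (use f_bounded in auto)
  have "(\<integral>\<omega>. f (U \<omega>, V \<omega>) \<partial>M) = (\<integral>p. f p \<partial>distr M (T1 \<Otimes>\<^sub>M T2) (\<lambda>x. (U x, V x)))"
    by (rule integral_distr[symmetric]) simp_all
  also have "\<dots> = (\<integral>x. (\<integral>y. f (x, y) \<partial>distr M T2 V) \<partial>distr M T1 U)"
    unfolding joint[symmetric] by (rule UV.integral_fst'[symmetric]) fact
  also have "\<dots> = (\<integral>\<omega>. (\<integral>y. f (U \<omega>, y) \<partial>distr M T2 V) \<partial>M)"
    by (rule integral_distr) simp_all
  also have "\<dots> = (\<integral>\<omega>. (\<integral>\<omega>'. f (U \<omega>, V \<omega>') \<partial>M) \<partial>M)"
  proof (rule Bochner_Integration.integral_cong[OF refl])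
    fix \<omega> assume "\<omega> \<in> space M"
    then have [measurable]: "U \<omega> \<in> space T1" by (rule measurable_space[OF U])
    show "(\<integral>y. f (U \<omega>, y) \<partial>distr M T2 V) = (\<integral>\<omega>'. f (U \<omega>, V \<omega>') \<partial>M)"
      by (rule integral_distr) measurable
  qed
  finally show ?thesis .
qed

lemma (in prob_space) real_cond_exp_indep_var:
  fixes f :: "'x \<times> 'x \<Rightarrow> real"
  assumes ind: "indep_var T1 U T2 V" and f[measurable]: "f \<in> borel_measurable (T1 \<Otimes>\<^sub>M T2)"
    and f_bounded: "\<And>p. \<bar>f p\<bar> \<le> c"
  shows "AE \<omega> in M. real_cond_exp M (vimage_algebra (space M) U T1) (\<lambda>\<omega>. f (U \<omega>, V \<omega>)) \<omega> =
    (\<integral>\<omega>'. f (U \<omega>, V \<omega>') \<partial>M)"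
proof -
  have U[measurable]: "random_variable T1 U" and [measurable]: "random_variable T2 V"
    using ind indep_var_rv1 indep_var_rv2 by blast+
  let ?F = "vimage_algebra (space M) U T1"
  define g where "g x = (\<integral>\<omega>'. f (x, V \<omega>') \<partial>M)" for x
  have g[measurable]: "g \<in> borel_measurable T1"
    unfolding g_def by measurable
  have g_bounded: "\<bar>g x\<bar> \<le> c" if x: "x \<in> space T1" for x
  proof -
    have [measurable]: "(\<lambda>\<omega>'. f (x, V \<omega>')) \<in> borel_measurable M"
      using x by measurable
    have "\<bar>g x\<bar> \<le> (\<integral>\<omega>'. \<bar>f (x, V \<omega>')\<bar> \<partial>M)"
      unfolding g_def by (rule integral_abs_bound)
    also have "\<dots> \<le> (\<integral>\<omega>'. c \<partial>M)"
      using order_trans[OF abs_ge_zero f_bounded]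
      by (intro integral_mono integrable_const_bound[where B=c]) (auto simp: f_bounded)
    finally show ?thesis by (simp add: prob_space)
  qed
  interpret sigma_finite_subalgebra M ?F
    by (rule sigma_finite_subalgebra_vimage_algebra) simp
  have "AE \<omega> in M. real_cond_exp M ?F (\<lambda>\<omega>. f (U \<omega>, V \<omega>)) \<omega> = g (U \<omega>)"
  proof (rule real_cond_exp_charact)
    fix A assume "A \<in> sets ?F"
    then obtain B where B[measurable]: "B \<in> sets T1" and A: "A = U -` B \<inter> space M"
      using sets_vimage_algebra2[of U "space M" T1] measurable_space[OF U] by auto
    have "(\<integral>\<omega>\<in>A. f (U \<omega>, V \<omega>) \<partial>M) = (\<integral>\<omega>. indicator B (U \<omega>) * f (U \<omega>, V \<omega>) \<partial>M)"
      unfolding set_lebesgue_integral_def A by (intro Bochner_Integration.integral_cong) (auto split: split_indicator)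
    also have "\<dots> = (\<integral>\<omega>. indicator B (U \<omega>) * g (U \<omega>) \<partial>M)"
    proof -
      have "(\<lambda>p. indicator B (fst p) * f p) \<in> borel_measurable (T1 \<Otimes>\<^sub>M T2)" by measurable
      moreover have "\<bar>indicator B (fst p) * f p\<bar> \<le> c" for p
        using f_bounded[of p] order_trans[OF abs_ge_zero f_bounded] by (auto split: split_indicator)
      ultimately show ?thesis
        using integral_indep_var_eq_iterated[OF ind, of "\<lambda>p. indicator B (fst p) * f p" c]
        by (simp add: g_def)
    qed
    also have "\<dots> = (\<integral>\<omega>\<in>A. g (U \<omega>) \<partial>M)"
      unfolding set_lebesgue_integral_def A by (intro Bochner_Integration.integral_cong) (auto split: split_indicator)
    finally show "(\<integral>\<omega>\<in>A. f (U \<omega>, V \<omega>) \<partial>M) = (\<integral>\<omega>\<in>A. g (U \<omega>) \<partial>M)" .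
  next
    show "integrable M (\<lambda>\<omega>. f (U \<omega>, V \<omega>))" "integrable M (\<lambda>\<omega>. g (U \<omega>))"
      by (auto intro!: integrable_const_bound[where B=c] g_bounded measurable_space[OF U]
          simp: f_bounded)
    show "(\<lambda>\<omega>. g (U \<omega>)) \<in> borel_measurable ?F"
      by (rule measurable_compose[OF measurable_vimage_algebra1 g]) (use measurable_space[OF U] in blast)
  qed
  then show ?thesis by (simp add: g_def)
qed

lemma (in finite_measure) integrable_mult_bounded:
  fixes f g :: "'a \<Rightarrow> real"
  assumes "f \<in> borel_measurable M" "g \<in> borel_measurable M"
    and f_bounded: "\<And>x. \<bar>f x\<bar> \<le> a" and g_bounded: "\<And>x. \<bar>g x\<bar> \<le> b"
  shows "integrable M (\<lambda>x. f x * g x)"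
proof (rule integrable_const_bound[where B="a * b"])
  have "\<bar>f x\<bar> * \<bar>g x\<bar> \<le> a * b" for x
    using f_bounded g_bounded order_trans[OF abs_ge_zero f_bounded] by (intro mult_mono) auto
  then show "AE x in M. norm (f x * g x) \<le> a * b"
    by (simp add: abs_mult)
qed (use assms in simp)

lemma borel_measurable_cis[measurable]: "cis \<in> borel_measurable borel"
  by (intro borel_measurable_continuous_onI continuous_intros)

lemma cmod_diff_mult_squared:
  fixes J F G :: complex
  shows "(cmod (J - F * G))\<^sup>2 = Re (J * cnj J) - 2 * Re (J * (cnj F * cnj G)) + Re (F * cnj F * (G * cnj G))"
  unfolding cmod_power2 by (simp add: power2_eq_square algebra_simps)

locale dcov_iid_sample = prob_space M for M :: "'w measure" +
  fixes X :: "'w \<Rightarrow> real ^ 'm" and Y :: "'w \<Rightarrow> real ^ 'n"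
    and Xs :: "nat \<Rightarrow> 'w \<Rightarrow> real ^ 'm" and Ys :: "nat \<Rightarrow> 'w \<Rightarrow> real ^ 'n"
    and \<mu> :: "(real ^ 'm) measure" and \<nu> :: "(real ^ 'n) measure"
    and \<Phi> :: "real ^ 'm \<Rightarrow> real" and \<Psi> :: "real ^ 'n \<Rightarrow> real"
  assumes X[measurable]: "X \<in> borel_measurable M" and Y[measurable]: "Y \<in> borel_measurable M"
    and XsYs: "\<And>i. i \<in> {1..4} \<Longrightarrow> Xs i \<in> borel_measurable M \<and> Ys i \<in> borel_measurable M"
    and indep: "indep_vars (\<lambda>_. borel \<Otimes>\<^sub>M borel) (\<lambda>i \<omega>. (Xs i \<omega>, Ys i \<omega>)) {1..4}"
    and ident: "\<And>i. i \<in> {1..4} \<Longrightarrow>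
        distr M (borel \<Otimes>\<^sub>M borel) (\<lambda>\<omega>. (Xs i \<omega>, Ys i \<omega>)) = distr M (borel \<Otimes>\<^sub>M borel) (\<lambda>\<omega>. (X \<omega>, Y \<omega>))"
    and \<mu>: "finite_sym_levy_full \<mu>" and \<nu>: "finite_sym_levy_full \<nu>"
    and Phi: "\<Phi> = levy_cf_exp \<mu>" and Psi: "\<Psi> = levy_cf_exp \<nu>"
begin

abbreviation S :: "((real ^ 'm) \<times> (real ^ 'n)) measure" where "S \<equiv> borel \<Otimes>\<^sub>M borel"

abbreviation Z :: "nat \<Rightarrow> 'w \<Rightarrow> (real ^ 'm) \<times> (real ^ 'n)" where "Z i \<omega> \<equiv> (Xs i \<omega>, Ys i \<omega>)"

abbreviation "c\<^sub>\<mu> \<equiv> measure \<mu> UNIV"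
abbreviation "c\<^sub>\<nu> \<equiv> measure \<nu> UNIV"

lemma measurable_copies[measurable]:
  "i \<in> {1..4} \<Longrightarrow> Xs i \<in> borel_measurable M" "i \<in> {1..4} \<Longrightarrow> Ys i \<in> borel_measurable M"
  using XsYs by auto

lemma Phi_measurable[measurable]: "\<Phi> \<in> borel_measurable borel"
  and Psi_measurable[measurable]: "\<Psi> \<in> borel_measurable borel"
  using borel_measurable_levy_cf_exp[OF \<mu>] borel_measurable_levy_cf_exp[OF \<nu>] Phi Psi by auto

lemma abs_Phi_le: "\<bar>\<Phi> x\<bar> \<le> 2 * c\<^sub>\<mu>" and abs_Psi_le: "\<bar>\<Psi> y\<bar> \<le> 2 * c\<^sub>\<nu>"
  using levy_cf_exp_nonneg[of \<mu> x] levy_cf_exp_le[OF \<mu>, of x]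
    levy_cf_exp_nonneg[of \<nu> y] levy_cf_exp_le[OF \<nu>, of y] Phi Psi
  by auto

lemma Psi_commute: "\<Psi> (y - y') = \<Psi> (y' - y)"
  using levy_cf_exp_commute Psi by auto

lemma integral_copy:
  fixes f :: "(real ^ 'm) \<times> (real ^ 'n) \<Rightarrow> 'b::{banach, second_countable_topology}"
  assumes i: "i \<in> {1..4}" and f[measurable]: "f \<in> borel_measurable S"
  shows "(\<integral>\<omega>. f (Z i \<omega>) \<partial>M) = (\<integral>\<omega>. f (X \<omega>, Y \<omega>) \<partial>M)"
proof -
  have "(\<integral>\<omega>. f (Z i \<omega>) \<partial>M) = (\<integral>z. f z \<partial>distr M S (Z i))"
    using i by (simp add: integral_distr)
  also have "\<dots> = (\<integral>\<omega>. f (X \<omega>, Y \<omega>) \<partial>M)"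
    by (simp add: ident[OF i] integral_distr)
  finally show ?thesis .
qed

lemma integral_cos_sum_copies:
  assumes I: "I \<subseteq> {1..4}" and \<phi>[measurable]: "\<And>i. i \<in> I \<Longrightarrow> \<phi> i \<in> borel_measurable S"
  shows "(\<integral>\<omega>. cos (\<Sum>i\<in>I. \<phi> i (Z i \<omega>)) \<partial>M) = Re (\<Prod>i\<in>I. \<integral>\<omega>. cis (\<phi> i (X \<omega>, Y \<omega>)) \<partial>M)"
proof -
  have fin: "finite I" using I by (rule finite_subset) simp
  have "indep_vars (\<lambda>_. borel) (\<lambda>i \<omega>. cis (\<phi> i (Z i \<omega>))) I"
    by (rule indep_vars_compose2[OF indep_vars_subset[OF indep I]]) (simp add: \<phi>)
  moreover have "integrable M (\<lambda>\<omega>. cis (\<phi> i (Z i \<omega>)))" if "i \<in> I" for i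
    using that I by (intro integrable_const_bound[where B=1]) auto
  ultimately have int: "integrable M (\<lambda>\<omega>. \<Prod>i\<in>I. cis (\<phi> i (Z i \<omega>)))"
    and prod: "(\<integral>\<omega>. (\<Prod>i\<in>I. cis (\<phi> i (Z i \<omega>))) \<partial>M) = (\<Prod>i\<in>I. \<integral>\<omega>. cis (\<phi> i (Z i \<omega>)) \<partial>M)"
    using indep_vars_integrable indep_vars_lebesgue_integral fin by blast+
  have "(\<integral>\<omega>. cos (\<Sum>i\<in>I. \<phi> i (Z i \<omega>)) \<partial>M) = (\<integral>\<omega>. Re (\<Prod>i\<in>I. cis (\<phi> i (Z i \<omega>))) \<partial>M)"
    by (simp add: cis_sum[OF fin, symmetric])
  also have "\<dots> = Re (\<Prod>i\<in>I. \<integral>\<omega>. cis (\<phi> i (Z i \<omega>)) \<partial>M)"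
    using int prod by simp
  also have "\<dots> = Re (\<Prod>i\<in>I. \<integral>\<omega>. cis (\<phi> i (X \<omega>, Y \<omega>)) \<partial>M)"
    using I by (intro arg_cong[where f=Re] prod.cong refl integral_copy) auto
  finally show ?thesis .
qed

lemma integral_cos_two_copies:
  assumes "{a, b} \<subseteq> {1..4}" "a \<noteq> b"
  shows "(\<integral>\<omega>. cos (s \<bullet> (Xs a \<omega> - Xs b \<omega>) + t \<bullet> (Ys a \<omega> - Ys b \<omega>)) \<partial>M) =
    Re (joint_char_fn M X Y s t * cnj (joint_char_fn M X Y s t))"
proof -
  define \<phi> where "\<phi> i z = (if i = a then s \<bullet> fst z + t \<bullet> snd z else - (s \<bullet> fst z + t \<bullet> snd z))"
    for i and z :: "(real ^ 'm) \<times> (real ^ 'n)"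
  have "(\<integral>\<omega>. cos (s \<bullet> (Xs a \<omega> - Xs b \<omega>) + t \<bullet> (Ys a \<omega> - Ys b \<omega>)) \<partial>M) =
      (\<integral>\<omega>. cos (\<Sum>i\<in>{a, b}. \<phi> i (Z i \<omega>)) \<partial>M)"
    using assms by (simp add: \<phi>_def algebra_simps)
  also have "\<dots> = Re (\<Prod>i\<in>{a, b}. \<integral>\<omega>. cis (\<phi> i (X \<omega>, Y \<omega>)) \<partial>M)"
    using assms by (intro integral_cos_sum_copies) (auto simp: \<phi>_def)
  finally show ?thesis
    using assms by (simp add: \<phi>_def joint_char_fn_def flip: integral_cis_uminus)
qed

lemma integral_cos_three_copies:
  assumes "{c, d, e} \<subseteq> {1..4}" "distinct [c, d, e]"
  shows "(\<integral>\<omega>. cos (s \<bullet> (Xs c \<omega> - Xs d \<omega>) + t \<bullet> (Ys c \<omega> - Ys e \<omega>)) \<partial>M) =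
    Re (joint_char_fn M X Y s t * (cnj (char_fn M X s) * cnj (char_fn M Y t)))"
proof -
  define \<phi> where "\<phi> i z = (if i = c then s \<bullet> fst z + t \<bullet> snd z else if i = d then - (s \<bullet> fst z)
      else - (t \<bullet> snd z))" for i and z :: "(real ^ 'm) \<times> (real ^ 'n)"
  have "(\<integral>\<omega>. cos (s \<bullet> (Xs c \<omega> - Xs d \<omega>) + t \<bullet> (Ys c \<omega> - Ys e \<omega>)) \<partial>M) =
      (\<integral>\<omega>. cos (\<Sum>i\<in>{c, d, e}. \<phi> i (Z i \<omega>)) \<partial>M)"
    using assms by (simp add: \<phi>_def algebra_simps)
  also have "\<dots> = Re (\<Prod>i\<in>{c, d, e}. \<integral>\<omega>. cis (\<phi> i (X \<omega>, Y \<omega>)) \<partial>M)"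
    using assms by (intro integral_cos_sum_copies) (auto simp: \<phi>_def)
  finally show ?thesis
    using assms by (simp add: \<phi>_def joint_char_fn_def char_fn_def flip: integral_cis_uminus)
qed

lemma integral_cos_four_copies:
  assumes "{i, j, k, l} \<subseteq> {1..4}" "distinct [i, j, k, l]"
  shows "(\<integral>\<omega>. cos (s \<bullet> (Xs i \<omega> - Xs j \<omega>) + t \<bullet> (Ys k \<omega> - Ys l \<omega>)) \<partial>M) =
    Re (char_fn M X s * cnj (char_fn M X s) * (char_fn M Y t * cnj (char_fn M Y t)))"
proof -
  define \<phi> where "\<phi> q z = (if q = i then s \<bullet> fst z else if q = j then - (s \<bullet> fst z)
      else if q = k then t \<bullet> snd z else - (t \<bullet> snd z))" for q and z :: "(real ^ 'm) \<times> (real ^ 'n)"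
  have "(\<integral>\<omega>. cos (s \<bullet> (Xs i \<omega> - Xs j \<omega>) + t \<bullet> (Ys k \<omega> - Ys l \<omega>)) \<partial>M) =
      (\<integral>\<omega>. cos (\<Sum>q\<in>{i, j, k, l}. \<phi> q (Z q \<omega>)) \<partial>M)"
    using assms by (simp add: \<phi>_def algebra_simps)
  also have "\<dots> = Re (\<Prod>q\<in>{i, j, k, l}. \<integral>\<omega>. cis (\<phi> q (X \<omega>, Y \<omega>)) \<partial>M)"
    using assms by (intro integral_cos_sum_copies) (auto simp: \<phi>_def)
  finally show ?thesis
    using assms by (simp add: \<phi>_def char_fn_def mult.assoc flip: integral_cis_uminus)
qed

lemma dcov2_eq_integral_products:
  assumes ab: "{a, b} \<subseteq> {1..4}" "a \<noteq> b" and cde: "{c, d, e} \<subseteq> {1..4}" "distinct [c, d, e]"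
  shows "dcov2 \<mu> \<nu> M X Y =
     (\<integral>\<omega>. (c\<^sub>\<mu> - \<Phi> (Xs a \<omega> - Xs b \<omega>)) * (c\<^sub>\<nu> - \<Psi> (Ys a \<omega> - Ys b \<omega>)) \<partial>M)
     - 2 * (\<integral>\<omega>. (c\<^sub>\<mu> - \<Phi> (Xs c \<omega> - Xs d \<omega>)) * (c\<^sub>\<nu> - \<Psi> (Ys c \<omega> - Ys e \<omega>)) \<partial>M)
     + (\<integral>\<omega>. (c\<^sub>\<mu> - \<Phi> (Xs 1 \<omega> - Xs 2 \<omega>)) * (c\<^sub>\<nu> - \<Psi> (Ys 3 \<omega> - Ys 4 \<omega>)) \<partial>M)"
proof -
  define E :: "('w \<Rightarrow> real ^ 'm) \<Rightarrow> ('w \<Rightarrow> real ^ 'n) \<Rightarrow> (real ^ 'm) \<times> (real ^ 'n) \<Rightarrow> real"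
    where "E A B = (\<lambda>(s, t). \<integral>\<omega>. cos (s \<bullet> A \<omega> + t \<bullet> B \<omega>) \<partial>M)" for A B
  let ?E1 = "E (\<lambda>\<omega>. Xs a \<omega> - Xs b \<omega>) (\<lambda>\<omega>. Ys a \<omega> - Ys b \<omega>)"
  let ?E2 = "E (\<lambda>\<omega>. Xs c \<omega> - Xs d \<omega>) (\<lambda>\<omega>. Ys c \<omega> - Ys e \<omega>)"
  let ?E3 = "E (\<lambda>\<omega>. Xs 1 \<omega> - Xs 2 \<omega>) (\<lambda>\<omega>. Ys 3 \<omega> - Ys 4 \<omega>)"
  have int: "integrable (\<mu> \<Otimes>\<^sub>M \<nu>) (E A B)"
    and integral: "(\<integral>p. E A B p \<partial>(\<mu> \<Otimes>\<^sub>M \<nu>)) = (\<integral>\<omega>. (c\<^sub>\<mu> - \<Phi> (A \<omega>)) * (c\<^sub>\<nu> - \<Psi> (B \<omega>)) \<partial>M)"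
    if "A \<in> borel_measurable M" "B \<in> borel_measurable M" for A B
    using integrable_expectation_cos_inner_pair_measure[OF \<mu> \<nu> finite_measure_axioms that]
      integral_expectation_cos_inner_pair_measure[OF \<mu> \<nu> finite_measure_axioms that]
    by (simp_all add: E_def Phi Psi)
  have "(cmod (joint_char_fn M X Y s t - char_fn M X s * char_fn M Y t))\<^sup>2 =
      ?E1 (s, t) - 2 * ?E2 (s, t) + ?E3 (s, t)" for s t
    unfolding cmod_diff_mult_squared E_def using ab cde
    by (simp add: integral_cos_two_copies integral_cos_three_copies integral_cos_four_copies)
  then have "dcov2 \<mu> \<nu> M X Y = (\<integral>p. ?E1 p - 2 * ?E2 p + ?E3 p \<partial>(\<mu> \<Otimes>\<^sub>M \<nu>))"
    unfolding dcov2_def by (simp add: case_prod_beta')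
  also have "\<dots> = (\<integral>p. ?E1 p \<partial>(\<mu> \<Otimes>\<^sub>M \<nu>)) - 2 * (\<integral>p. ?E2 p \<partial>(\<mu> \<Otimes>\<^sub>M \<nu>)) + (\<integral>p. ?E3 p \<partial>(\<mu> \<Otimes>\<^sub>M \<nu>))"
    using ab cde by (simp add: int)
  finally show ?thesis
    using ab cde by (simp add: integral)
qed

lemma integral_fresh_copy:
  fixes f :: "(nat \<Rightarrow> (real ^ 'm) \<times> (real ^ 'n)) \<times> ((real ^ 'm) \<times> (real ^ 'n)) \<Rightarrow> real"
  assumes A: "A \<subseteq> {1..4}" and k: "k \<in> {1..4}" "k \<notin> A"
    and f[measurable]: "f \<in> borel_measurable (PiM A (\<lambda>_. S) \<Otimes>\<^sub>M S)" and f_bounded: "\<And>p. \<bar>f p\<bar> \<le> c"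
  shows "(\<integral>\<omega>. f (restrict (\<lambda>i. Z i \<omega>) A, Z k \<omega>) \<partial>M) =
    (\<integral>\<omega>. (\<integral>\<omega>'. f (restrict (\<lambda>i. Z i \<omega>) A, (X \<omega>', Y \<omega>')) \<partial>M) \<partial>M)"
proof -
  have ind: "indep_var (PiM A (\<lambda>_. S)) (\<lambda>\<omega>. restrict (\<lambda>i. Z i \<omega>) A)
      (PiM {k} (\<lambda>_. S)) (\<lambda>\<omega>. restrict (\<lambda>i. Z i \<omega>) {k})"
    using A k by (intro indep_var_restrict[OF indep]) auto
  have "(\<lambda>p. f (fst p, snd p k)) \<in> borel_measurable (PiM A (\<lambda>_. S) \<Otimes>\<^sub>M PiM {k} (\<lambda>_. S))"
    by measurable
  from integral_indep_var_eq_iterated[OF ind this f_bounded]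
  have "(\<integral>\<omega>. f (restrict (\<lambda>i. Z i \<omega>) A, Z k \<omega>) \<partial>M) =
      (\<integral>\<omega>. (\<integral>\<omega>'. f (restrict (\<lambda>i. Z i \<omega>) A, Z k \<omega>') \<partial>M) \<partial>M)"
    by simp
  also have "\<dots> = (\<integral>\<omega>. (\<integral>\<omega>'. f (restrict (\<lambda>i. Z i \<omega>) A, (X \<omega>', Y \<omega>')) \<partial>M) \<partial>M)"
  proof (rule Bochner_Integration.integral_cong[OF refl])
    fix \<omega>
    have "restrict (\<lambda>i. Z i \<omega>) A \<in> space (PiM A (\<lambda>_. S))"
      by (simp add: space_PiM space_pair_measure)
    then have "(\<lambda>z. f (restrict (\<lambda>i. Z i \<omega>) A, z)) \<in> borel_measurable S"
      by measurable
    from integral_copy[OF k(1) this]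
    show "(\<integral>\<omega>'. f (restrict (\<lambda>i. Z i \<omega>) A, Z k \<omega>') \<partial>M) =
        (\<integral>\<omega>'. f (restrict (\<lambda>i. Z i \<omega>) A, (X \<omega>', Y \<omega>')) \<partial>M)" .
  qed
  finally show ?thesis .
qed

definition Phi_avg :: "real ^ 'm \<Rightarrow> real" where "Phi_avg x = (\<integral>\<omega>. \<Phi> (x - X \<omega>) \<partial>M)"
definition Psi_avg :: "real ^ 'n \<Rightarrow> real" where "Psi_avg y = (\<integral>\<omega>. \<Psi> (y - Y \<omega>) \<partial>M)"
definition Phi_mean :: real where "Phi_mean = (\<integral>\<omega>. Phi_avg (X \<omega>) \<partial>M)"
definition Psi_mean :: real where "Psi_mean = (\<integral>\<omega>. Psi_avg (Y \<omega>) \<partial>M)"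

lemma Phi_avg_measurable[measurable]: "Phi_avg \<in> borel_measurable borel"
  and Psi_avg_measurable[measurable]: "Psi_avg \<in> borel_measurable borel"
  unfolding Phi_avg_def[abs_def] Psi_avg_def[abs_def] by measurable

lemma abs_Phi_avg_le: "\<bar>Phi_avg x\<bar> \<le> 2 * c\<^sub>\<mu>"
proof -
  have "\<bar>Phi_avg x\<bar> \<le> (\<integral>\<omega>. \<bar>\<Phi> (x - X \<omega>)\<bar> \<partial>M)"
    unfolding Phi_avg_def by (rule integral_abs_bound)
  also have "\<dots> \<le> (\<integral>\<omega>. 2 * c\<^sub>\<mu> \<partial>M)"
    by (intro integral_mono integrable_const_bound[where B="2 * c\<^sub>\<mu>"]) (auto simp: abs_Phi_le)
  finally show ?thesis by (simp add: prob_space)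
qed

lemma abs_Psi_avg_le: "\<bar>Psi_avg y\<bar> \<le> 2 * c\<^sub>\<nu>"
proof -
  have "\<bar>Psi_avg y\<bar> \<le> (\<integral>\<omega>. \<bar>\<Psi> (y - Y \<omega>)\<bar> \<partial>M)"
    unfolding Psi_avg_def by (rule integral_abs_bound)
  also have "\<dots> \<le> (\<integral>\<omega>. 2 * c\<^sub>\<nu> \<partial>M)"
    by (intro integral_mono integrable_const_bound[where B="2 * c\<^sub>\<nu>"]) (auto simp: abs_Psi_le)
  finally show ?thesis by (simp add: prob_space)
qed

lemma integral_Phi_mult_fresh_copy:
  fixes h :: "(nat \<Rightarrow> (real ^ 'm) \<times> (real ^ 'n)) \<Rightarrow> real"
  assumes A: "A \<subseteq> {1..4}" "i \<in> A" and k: "k \<in> {1..4}" "k \<notin> A"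
    and h[measurable]: "h \<in> borel_measurable (PiM A (\<lambda>_. S))" and h_bounded: "\<And>u. \<bar>h u\<bar> \<le> c"
  shows "(\<integral>\<omega>. \<Phi> (Xs i \<omega> - Xs k \<omega>) * h (restrict (\<lambda>j. Z j \<omega>) A) \<partial>M) =
    (\<integral>\<omega>. Phi_avg (Xs i \<omega>) * h (restrict (\<lambda>j. Z j \<omega>) A) \<partial>M)"
proof -
  have meas: "(\<lambda>p. \<Phi> (fst (fst p i) - fst (snd p)) * h (fst p)) \<in> borel_measurable (PiM A (\<lambda>_. S) \<Otimes>\<^sub>M S)"
    using A(2) by measurable
  have bound: "\<bar>\<Phi> (fst (fst p i) - fst (snd p)) * h (fst p)\<bar> \<le> 2 * c\<^sub>\<mu> * c" for p
    unfolding abs_mult by (intro mult_mono abs_Phi_le h_bounded) auto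
  from integral_fresh_copy[OF A(1) k meas bound] A(2) show ?thesis
    by (simp add: Phi_avg_def)
qed

lemma integral_mult_Psi_fresh_copy:
  fixes h :: "(nat \<Rightarrow> (real ^ 'm) \<times> (real ^ 'n)) \<Rightarrow> real"
  assumes A: "A \<subseteq> {1..4}" "i \<in> A" and k: "k \<in> {1..4}" "k \<notin> A"
    and h[measurable]: "h \<in> borel_measurable (PiM A (\<lambda>_. S))" and h_bounded: "\<And>u. \<bar>h u\<bar> \<le> c"
  shows "(\<integral>\<omega>. h (restrict (\<lambda>j. Z j \<omega>) A) * \<Psi> (Ys i \<omega> - Ys k \<omega>) \<partial>M) =
    (\<integral>\<omega>. h (restrict (\<lambda>j. Z j \<omega>) A) * Psi_avg (Ys i \<omega>) \<partial>M)"
proof -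
  have meas: "(\<lambda>p. h (fst p) * \<Psi> (snd (fst p i) - snd (snd p))) \<in> borel_measurable (PiM A (\<lambda>_. S) \<Otimes>\<^sub>M S)"
    using A(2) by measurable
  have bound: "\<bar>h (fst p) * \<Psi> (snd (fst p i) - snd (snd p))\<bar> \<le> c * (2 * c\<^sub>\<nu>)" for p
    unfolding abs_mult
    by (intro mult_mono abs_Psi_le h_bounded) (auto intro: order_trans[OF abs_ge_zero h_bounded])
  from integral_fresh_copy[OF A(1) k meas bound] A(2) show ?thesis
    by (simp add: Psi_avg_def)
qed

lemma integral_mult_fresh_copy:
  fixes h :: "(nat \<Rightarrow> (real ^ 'm) \<times> (real ^ 'n)) \<Rightarrow> real"
  assumes A: "A \<subseteq> {1..4}" and k: "k \<in> {1..4}" "k \<notin> A"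
    and h[measurable]: "h \<in> borel_measurable (PiM A (\<lambda>_. S))" and h_bounded: "\<And>u. \<bar>h u\<bar> \<le> c"
    and g[measurable]: "g \<in> borel_measurable S" and g_bounded: "\<And>z. \<bar>g z\<bar> \<le> d"
  shows "(\<integral>\<omega>. h (restrict (\<lambda>j. Z j \<omega>) A) * g (Z k \<omega>) \<partial>M) =
    (\<integral>\<omega>. h (restrict (\<lambda>j. Z j \<omega>) A) \<partial>M) * (\<integral>\<omega>. g (X \<omega>, Y \<omega>) \<partial>M)"
proof -
  have meas: "(\<lambda>p. h (fst p) * g (snd p)) \<in> borel_measurable (PiM A (\<lambda>_. S) \<Otimes>\<^sub>M S)"
    by measurable
  have bound: "\<bar>h (fst p) * g (snd p)\<bar> \<le> c * d" for p
    unfolding abs_mult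
    by (intro mult_mono h_bounded g_bounded) (auto intro: order_trans[OF abs_ge_zero h_bounded])
  from integral_fresh_copy[OF A k meas bound] show ?thesis
    by simp
qed

lemma integral_Phi_copies: "{i, j} \<subseteq> {1..4} \<Longrightarrow> i \<noteq> j \<Longrightarrow> (\<integral>\<omega>. \<Phi> (Xs i \<omega> - Xs j \<omega>) \<partial>M) = Phi_mean"
  using integral_Phi_mult_fresh_copy[of "{i}" i j "\<lambda>_. 1" 1] integral_copy[of i "\<lambda>z. Phi_avg (fst z)"]
  by (simp add: Phi_mean_def)

lemma integral_Psi_copies: "{i, j} \<subseteq> {1..4} \<Longrightarrow> i \<noteq> j \<Longrightarrow> (\<integral>\<omega>. \<Psi> (Ys i \<omega> - Ys j \<omega>) \<partial>M) = Psi_mean"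
  using integral_mult_Psi_fresh_copy[of "{i}" i j "\<lambda>_. 1" 1] integral_copy[of i "\<lambda>z. Psi_avg (snd z)"]
  by (simp add: Psi_mean_def)

lemma integral_Phi_mult_Psi_disjoint_copies:
  assumes "{i, j, k, l} \<subseteq> {1..4}" "distinct [i, j, k, l]"
  shows "(\<integral>\<omega>. \<Phi> (Xs i \<omega> - Xs j \<omega>) * \<Psi> (Ys k \<omega> - Ys l \<omega>) \<partial>M) = Phi_mean * Psi_mean"
proof -
  have "(\<integral>\<omega>. \<Phi> (Xs i \<omega> - Xs j \<omega>) * \<Psi> (Ys k \<omega> - Ys l \<omega>) \<partial>M) =
      (\<integral>\<omega>. \<Phi> (Xs i \<omega> - Xs j \<omega>) * Psi_avg (Ys k \<omega>) \<partial>M)"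
    using assms integral_mult_Psi_fresh_copy[of "{i, j, k}" k l "\<lambda>u. \<Phi> (fst (u i) - fst (u j))" "2 * c\<^sub>\<mu>"]
    by (simp add: abs_Phi_le)
  also have "\<dots> = (\<integral>\<omega>. \<Phi> (Xs i \<omega> - Xs j \<omega>) \<partial>M) * Psi_mean"
    using assms integral_mult_fresh_copy[of "{i, j}" k "\<lambda>u. \<Phi> (fst (u i) - fst (u j))" "2 * c\<^sub>\<mu>"
        "\<lambda>z. Psi_avg (snd z)" "2 * c\<^sub>\<nu>"]
    by (simp add: abs_Phi_le abs_Psi_avg_le Psi_mean_def)
  finally show ?thesis
    using assms by (simp add: integral_Phi_copies)
qed

lemma indep_var_copies:
  assumes ij: "{i, j} \<subseteq> {1..4}" "i \<noteq> j"
    and g[measurable]: "g \<in> measurable S N" and h[measurable]: "h \<in> measurable S N"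
  shows "indep_var N (\<lambda>\<omega>. g (Z i \<omega>)) N (\<lambda>\<omega>. h (Z j \<omega>))"
proof -
  have ind: "indep_var (PiM {i} (\<lambda>_. S)) (\<lambda>\<omega>. restrict (\<lambda>k. Z k \<omega>) {i})
      (PiM {j} (\<lambda>_. S)) (\<lambda>\<omega>. restrict (\<lambda>k. Z k \<omega>) {j})"
    using ij by (intro indep_var_restrict[OF indep]) auto
  have g': "(\<lambda>u. g (u i)) \<in> measurable (PiM {i} (\<lambda>_. S)) N"
    and h': "(\<lambda>u. h (u j)) \<in> measurable (PiM {j} (\<lambda>_. S)) N"
    by measurable
  from indep_var_compose[OF ind g' h'] show ?thesis
    by (simp add: comp_def)
qed

lemma AE_real_cond_exp_Phi_copies:
  assumes "{i, j} \<subseteq> {1..4}" "i \<noteq> j"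
  shows "AE \<omega> in M. real_cond_exp M (vimage_algebra (space M) (Xs i) borel)
    (\<lambda>\<omega>. \<Phi> (Xs i \<omega> - Xs j \<omega>)) \<omega> = Phi_avg (Xs i \<omega>)"
proof -
  have "(\<lambda>p. \<Phi> (fst p - snd p)) \<in> borel_measurable (borel \<Otimes>\<^sub>M borel)"
    by measurable
  from real_cond_exp_indep_var[OF indep_var_copies[OF assms measurable_fst measurable_fst] this abs_Phi_le]
  have "AE \<omega> in M. real_cond_exp M (vimage_algebra (space M) (Xs i) borel)
    (\<lambda>\<omega>. \<Phi> (Xs i \<omega> - Xs j \<omega>)) \<omega> = (\<integral>\<omega>'. \<Phi> (Xs i \<omega> - Xs j \<omega>') \<partial>M)"
    by simp
  moreover have "(\<integral>\<omega>'. \<Phi> (x - Xs j \<omega>') \<partial>M) = Phi_avg x" for x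
    using assms integral_copy[of j "\<lambda>z. \<Phi> (x - fst z)"] by (simp add: Phi_avg_def)
  ultimately show ?thesis by simp
qed

lemma AE_real_cond_exp_Psi_copies:
  assumes "{i, j} \<subseteq> {1..4}" "i \<noteq> j"
  shows "AE \<omega> in M. real_cond_exp M (vimage_algebra (space M) (Ys i) borel)
    (\<lambda>\<omega>. \<Psi> (Ys i \<omega> - Ys j \<omega>)) \<omega> = Psi_avg (Ys i \<omega>)"
proof -
  have "(\<lambda>p. \<Psi> (fst p - snd p)) \<in> borel_measurable (borel \<Otimes>\<^sub>M borel)"
    by measurable
  from real_cond_exp_indep_var[OF indep_var_copies[OF assms measurable_snd measurable_snd] this abs_Psi_le]
  have "AE \<omega> in M. real_cond_exp M (vimage_algebra (space M) (Ys i) borel)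
    (\<lambda>\<omega>. \<Psi> (Ys i \<omega> - Ys j \<omega>)) \<omega> = (\<integral>\<omega>'. \<Psi> (Ys i \<omega> - Ys j \<omega>') \<partial>M)"
    by simp
  moreover have "(\<integral>\<omega>'. \<Psi> (y - Ys j \<omega>') \<partial>M) = Psi_avg y" for y
    using assms integral_copy[of j "\<lambda>z. \<Psi> (y - snd z)"] by (simp add: Psi_avg_def)
  ultimately show ?thesis by simp
qed

lemma integrable_Phi_mult_Psi:
  "A \<in> borel_measurable M \<Longrightarrow> B \<in> borel_measurable M \<Longrightarrow> integrable M (\<lambda>\<omega>. \<Phi> (A \<omega>) * \<Psi> (B \<omega>))"
  by (rule integrable_mult_bounded[where a="2 * c\<^sub>\<mu>" and b="2 * c\<^sub>\<nu>"]) (simp_all add: abs_Phi_le abs_Psi_le)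

lemma integral_diff_Phi_mult_diff_Psi_copies:
  assumes "{i, j, k, l} \<subseteq> {1..4}" "i \<noteq> j" "k \<noteq> l"
  shows "(\<integral>\<omega>. (c\<^sub>\<mu> - \<Phi> (Xs i \<omega> - Xs j \<omega>)) * (c\<^sub>\<nu> - \<Psi> (Ys k \<omega> - Ys l \<omega>)) \<partial>M) =
    c\<^sub>\<mu> * c\<^sub>\<nu> - c\<^sub>\<mu> * Psi_mean - c\<^sub>\<nu> * Phi_mean
      + (\<integral>\<omega>. \<Phi> (Xs i \<omega> - Xs j \<omega>) * \<Psi> (Ys k \<omega> - Ys l \<omega>) \<partial>M)"
proof -
  have [measurable]: "Xs i \<in> borel_measurable M" "Xs j \<in> borel_measurable M"
    "Ys k \<in> borel_measurable M" "Ys l \<in> borel_measurable M"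
    using assms by auto
  have "integrable M (\<lambda>\<omega>. \<Phi> (Xs i \<omega> - Xs j \<omega>))"
    by (rule integrable_const_bound[where B="2 * c\<^sub>\<mu>"]) (simp_all add: abs_Phi_le)
  moreover have "integrable M (\<lambda>\<omega>. \<Psi> (Ys k \<omega> - Ys l \<omega>))"
    by (rule integrable_const_bound[where B="2 * c\<^sub>\<nu>"]) (simp_all add: abs_Psi_le)
  moreover have "integrable M (\<lambda>\<omega>. \<Phi> (Xs i \<omega> - Xs j \<omega>) * \<Psi> (Ys k \<omega> - Ys l \<omega>))"
    by (rule integrable_Phi_mult_Psi) simp_all
  ultimately show ?thesis
    using assms by (simp add: algebra_simps prob_space integral_Phi_copies integral_Psi_copies)
qed

lemma dcov2_eq_integral_Phi_mult_Psi:
  assumes ab: "{a, b} \<subseteq> {1..4}" "a \<noteq> b" and cde: "{c, d, e} \<subseteq> {1..4}" "distinct [c, d, e]"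
  shows "dcov2 \<mu> \<nu> M X Y =
     (\<integral>\<omega>. \<Phi> (Xs a \<omega> - Xs b \<omega>) * \<Psi> (Ys a \<omega> - Ys b \<omega>) \<partial>M)
     - 2 * (\<integral>\<omega>. \<Phi> (Xs c \<omega> - Xs d \<omega>) * \<Psi> (Ys c \<omega> - Ys e \<omega>) \<partial>M) + Phi_mean * Psi_mean"
  using dcov2_eq_integral_products[OF assms] assms integral_Phi_mult_Psi_disjoint_copies[of 1 2 3 4]
  by (simp add: integral_diff_Phi_mult_diff_Psi_copies)

lemma dcov2_eq_expectations:
  "dcov2 \<mu> \<nu> M X Y =
     (\<integral>\<omega>. \<Phi> (Xs 1 \<omega> - Xs 4 \<omega>) * \<Psi> (Ys 1 \<omega> - Ys 4 \<omega>) \<partial>M)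
     - 2 * (\<integral>\<omega>. \<Phi> (Xs 1 \<omega> - Xs 2 \<omega>) * \<Psi> (Ys 1 \<omega> - Ys 3 \<omega>) \<partial>M)
     + (\<integral>\<omega>. \<Phi> (Xs 1 \<omega> - Xs 2 \<omega>) \<partial>M) * (\<integral>\<omega>. \<Psi> (Ys 3 \<omega> - Ys 4 \<omega>) \<partial>M)"
  using dcov2_eq_integral_Phi_mult_Psi[of 1 4 1 2 3] integral_Phi_copies[of 1 2] integral_Psi_copies[of 3 4]
  by simp

lemma dcov2_eq_integral_Phi_mult_Psi_combination:
  "dcov2 \<mu> \<nu> M X Y =
     (\<integral>\<omega>. \<Phi> (Xs 1 \<omega> - Xs 4 \<omega>) *
        (\<Psi> (Ys 1 \<omega> - Ys 4 \<omega>) - 2 * \<Psi> (Ys 1 \<omega> - Ys 3 \<omega>) + \<Psi> (Ys 2 \<omega> - Ys 3 \<omega>)) \<partial>M)"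
proof -
  have int: "integrable M (\<lambda>\<omega>. \<Phi> (Xs i \<omega> - Xs j \<omega>) * \<Psi> (Ys k \<omega> - Ys l \<omega>))"
    if "{i, j, k, l} \<subseteq> {1..4}" for i j k l
    using that by (intro integrable_Phi_mult_Psi) auto
  have "(\<integral>\<omega>. \<Phi> (Xs 1 \<omega> - Xs 4 \<omega>) *
        (\<Psi> (Ys 1 \<omega> - Ys 4 \<omega>) - 2 * \<Psi> (Ys 1 \<omega> - Ys 3 \<omega>) + \<Psi> (Ys 2 \<omega> - Ys 3 \<omega>)) \<partial>M) =
      (\<integral>\<omega>. \<Phi> (Xs 1 \<omega> - Xs 4 \<omega>) * \<Psi> (Ys 1 \<omega> - Ys 4 \<omega>)
        - 2 * (\<Phi> (Xs 1 \<omega> - Xs 4 \<omega>) * \<Psi> (Ys 1 \<omega> - Ys 3 \<omega>))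
        + \<Phi> (Xs 1 \<omega> - Xs 4 \<omega>) * \<Psi> (Ys 2 \<omega> - Ys 3 \<omega>) \<partial>M)"
    by (simp add: algebra_simps)
  also have "\<dots> = (\<integral>\<omega>. \<Phi> (Xs 1 \<omega> - Xs 4 \<omega>) * \<Psi> (Ys 1 \<omega> - Ys 4 \<omega>) \<partial>M)
      - 2 * (\<integral>\<omega>. \<Phi> (Xs 1 \<omega> - Xs 4 \<omega>) * \<Psi> (Ys 1 \<omega> - Ys 3 \<omega>) \<partial>M)
      + (\<integral>\<omega>. \<Phi> (Xs 1 \<omega> - Xs 4 \<omega>) * \<Psi> (Ys 2 \<omega> - Ys 3 \<omega>) \<partial>M)"
    by (simp add: int)
  finally show ?thesis
    using dcov2_eq_integral_Phi_mult_Psi[of 1 4 1 4 3] integral_Phi_mult_Psi_disjoint_copies[of 1 4 2 3]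
    by simp
qed

lemma dcov2_eq_integral_diff_mult_diff:
  "dcov2 \<mu> \<nu> M X Y =
     (\<integral>\<omega>. (\<Phi> (Xs 1 \<omega> - Xs 4 \<omega>) - \<Phi> (Xs 4 \<omega> - Xs 2 \<omega>)) *
        (\<Psi> (Ys 4 \<omega> - Ys 1 \<omega>) - \<Psi> (Ys 1 \<omega> - Ys 3 \<omega>)) \<partial>M)"
proof -
  have int: "integrable M (\<lambda>\<omega>. \<Phi> (Xs i \<omega> - Xs j \<omega>) * \<Psi> (Ys k \<omega> - Ys l \<omega>))"
    if "{i, j, k, l} \<subseteq> {1..4}" for i j k l
    using that by (intro integrable_Phi_mult_Psi) auto
  have "(\<integral>\<omega>. (\<Phi> (Xs 1 \<omega> - Xs 4 \<omega>) - \<Phi> (Xs 4 \<omega> - Xs 2 \<omega>)) *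
        (\<Psi> (Ys 4 \<omega> - Ys 1 \<omega>) - \<Psi> (Ys 1 \<omega> - Ys 3 \<omega>)) \<partial>M) =
      (\<integral>\<omega>. \<Phi> (Xs 1 \<omega> - Xs 4 \<omega>) * \<Psi> (Ys 1 \<omega> - Ys 4 \<omega>)
        - \<Phi> (Xs 1 \<omega> - Xs 4 \<omega>) * \<Psi> (Ys 1 \<omega> - Ys 3 \<omega>)
        - \<Phi> (Xs 4 \<omega> - Xs 2 \<omega>) * \<Psi> (Ys 4 \<omega> - Ys 1 \<omega>)
        + \<Phi> (Xs 4 \<omega> - Xs 2 \<omega>) * \<Psi> (Ys 1 \<omega> - Ys 3 \<omega>) \<partial>M)"
    by (rule Bochner_Integration.integral_cong[OF refl]) (simp add: algebra_simps Psi_commute[of "Ys 4 _"])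
  also have "\<dots> = (\<integral>\<omega>. \<Phi> (Xs 1 \<omega> - Xs 4 \<omega>) * \<Psi> (Ys 1 \<omega> - Ys 4 \<omega>) \<partial>M)
      - (\<integral>\<omega>. \<Phi> (Xs 1 \<omega> - Xs 4 \<omega>) * \<Psi> (Ys 1 \<omega> - Ys 3 \<omega>) \<partial>M)
      - (\<integral>\<omega>. \<Phi> (Xs 4 \<omega> - Xs 2 \<omega>) * \<Psi> (Ys 4 \<omega> - Ys 1 \<omega>) \<partial>M)
      + (\<integral>\<omega>. \<Phi> (Xs 4 \<omega> - Xs 2 \<omega>) * \<Psi> (Ys 1 \<omega> - Ys 3 \<omega>) \<partial>M)"
    by (simp add: int)
  finally show ?thesis
    using dcov2_eq_integral_Phi_mult_Psi[of 1 4 1 4 3] dcov2_eq_integral_Phi_mult_Psi[of 1 4 4 2 1]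
      integral_Phi_mult_Psi_disjoint_copies[of 4 2 1 3]
    by simp
qed

lemma dcov2_eq_integral_cond_centered:
  "dcov2 \<mu> \<nu> M X Y =
     (\<integral>\<omega>. (\<Phi> (Xs 1 \<omega> - Xs 4 \<omega>)
             - real_cond_exp M (vimage_algebra (space M) (Xs 4) borel) (\<lambda>\<omega>'. \<Phi> (Xs 4 \<omega>' - Xs 1 \<omega>')) \<omega>) *
        (\<Psi> (Ys 4 \<omega> - Ys 1 \<omega>)
             - real_cond_exp M (vimage_algebra (space M) (Ys 1) borel) (\<lambda>\<omega>'. \<Psi> (Ys 1 \<omega>' - Ys 4 \<omega>')) \<omega>) \<partial>M)"
  (is "_ = integral\<^sup>L M ?f")
proof -
  have "integral\<^sup>L M ?f =
      (\<integral>\<omega>. (\<Phi> (Xs 1 \<omega> - Xs 4 \<omega>) - Phi_avg (Xs 4 \<omega>)) * (\<Psi> (Ys 4 \<omega> - Ys 1 \<omega>) - Psi_avg (Ys 1 \<omega>)) \<partial>M)"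
    using AE_real_cond_exp_Phi_copies[of 4 1] AE_real_cond_exp_Psi_copies[of 1 4]
    by (intro integral_cong_AE) (measurable, auto)
  also have "\<dots> = (\<integral>\<omega>. \<Phi> (Xs 1 \<omega> - Xs 4 \<omega>) * \<Psi> (Ys 1 \<omega> - Ys 4 \<omega>)
        - \<Phi> (Xs 1 \<omega> - Xs 4 \<omega>) * Psi_avg (Ys 1 \<omega>)
        - Phi_avg (Xs 4 \<omega>) * \<Psi> (Ys 4 \<omega> - Ys 1 \<omega>)
        + Phi_avg (Xs 4 \<omega>) * Psi_avg (Ys 1 \<omega>) \<partial>M)"
    by (rule Bochner_Integration.integral_cong[OF refl]) (simp add: algebra_simps Psi_commute[of "Ys 4 _"])
  also have "\<dots> = (\<integral>\<omega>. \<Phi> (Xs 1 \<omega> - Xs 4 \<omega>) * \<Psi> (Ys 1 \<omega> - Ys 4 \<omega>) \<partial>M)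
      - (\<integral>\<omega>. \<Phi> (Xs 1 \<omega> - Xs 4 \<omega>) * Psi_avg (Ys 1 \<omega>) \<partial>M)
      - (\<integral>\<omega>. Phi_avg (Xs 4 \<omega>) * \<Psi> (Ys 4 \<omega> - Ys 1 \<omega>) \<partial>M)
      + (\<integral>\<omega>. Phi_avg (Xs 4 \<omega>) * Psi_avg (Ys 1 \<omega>) \<partial>M)"
  proof -
    have "integrable M (\<lambda>\<omega>. \<Phi> (Xs 1 \<omega> - Xs 4 \<omega>) * \<Psi> (Ys 1 \<omega> - Ys 4 \<omega>))"
      "integrable M (\<lambda>\<omega>. \<Phi> (Xs 1 \<omega> - Xs 4 \<omega>) * Psi_avg (Ys 1 \<omega>))"
      "integrable M (\<lambda>\<omega>. Phi_avg (Xs 4 \<omega>) * \<Psi> (Ys 4 \<omega> - Ys 1 \<omega>))"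
      "integrable M (\<lambda>\<omega>. Phi_avg (Xs 4 \<omega>) * Psi_avg (Ys 1 \<omega>))"
      by (intro integrable_mult_bounded[where a="2 * c\<^sub>\<mu>" and b="2 * c\<^sub>\<nu>"];
          simp add: abs_Phi_le abs_Psi_le abs_Phi_avg_le abs_Psi_avg_le)+
    then show ?thesis by simp
  qed
  also have "\<dots> = (\<integral>\<omega>. \<Phi> (Xs 1 \<omega> - Xs 4 \<omega>) * \<Psi> (Ys 1 \<omega> - Ys 4 \<omega>) \<partial>M)
      - (\<integral>\<omega>. \<Phi> (Xs 1 \<omega> - Xs 4 \<omega>) * \<Psi> (Ys 1 \<omega> - Ys 2 \<omega>) \<partial>M)
      - (\<integral>\<omega>. \<Phi> (Xs 4 \<omega> - Xs 2 \<omega>) * \<Psi> (Ys 4 \<omega> - Ys 1 \<omega>) \<partial>M)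
      + Phi_mean * Psi_mean"
    using integral_mult_Psi_fresh_copy[of "{1, 4}" 1 2 "\<lambda>u. \<Phi> (fst (u 1) - fst (u 4))" "2 * c\<^sub>\<mu>"]
      integral_Phi_mult_fresh_copy[of "{1, 4}" 4 2 "\<lambda>u. \<Psi> (snd (u 4) - snd (u 1))" "2 * c\<^sub>\<nu>"]
      integral_mult_fresh_copy[of "{4}" 1 "\<lambda>u. Phi_avg (fst (u 4))" "2 * c\<^sub>\<mu>"
          "\<lambda>z. Psi_avg (snd z)" "2 * c\<^sub>\<nu>"]
      integral_copy[of 4 "\<lambda>z. Phi_avg (fst z)"]
    by (simp add: abs_Phi_le abs_Psi_le abs_Phi_avg_le abs_Psi_avg_le Phi_mean_def Psi_mean_def)
  also have "\<dots> = dcov2 \<mu> \<nu> M X Y"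
    using dcov2_eq_integral_Phi_mult_Psi[of 1 4 1 4 2] dcov2_eq_integral_Phi_mult_Psi[of 1 4 4 2 1]
    by simp
  finally show ?thesis by simp
qed

end

theorem corollary3p4:
  fixes M :: "'w measure"
    and X :: "'w \<Rightarrow> real ^ 'm" and Y :: "'w \<Rightarrow> real ^ 'n"
    and Xs :: "nat \<Rightarrow> 'w \<Rightarrow> real ^ 'm" and Ys :: "nat \<Rightarrow> 'w \<Rightarrow> real ^ 'n"
    and \<mu> :: "(real ^ 'm) measure" and \<nu> :: "(real ^ 'n) measure"
    and \<Phi> :: "real ^ 'm \<Rightarrow> real" and \<Psi> :: "real ^ 'n \<Rightarrow> real"
  assumes P: "prob_space M"
    and X: "X \<in> borel_measurable M" and Y: "Y \<in> borel_measurable M"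
    and XsYs: "\<And>i. i \<in> {1..4} \<Longrightarrow> Xs i \<in> borel_measurable M \<and> Ys i \<in> borel_measurable M"
    and indep: "prob_space.indep_vars M (\<lambda>_. borel \<Otimes>\<^sub>M borel) (\<lambda>i \<omega>. (Xs i \<omega>, Ys i \<omega>)) {1..4}"
    and ident: "\<And>i. i \<in> {1..4} \<Longrightarrow>
        distr M (borel \<Otimes>\<^sub>M borel) (\<lambda>\<omega>. (Xs i \<omega>, Ys i \<omega>)) = distr M (borel \<Otimes>\<^sub>M borel) (\<lambda>\<omega>. (X \<omega>, Y \<omega>))"
    and mu: "finite_sym_levy_full \<mu>" and nu: "finite_sym_levy_full \<nu>"
    and Phi: "\<Phi> = levy_cf_exp \<mu>" and Psi: "\<Psi> = levy_cf_exp \<nu>"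
  shows "dcov2 \<mu> \<nu> M X Y =
           (\<integral>\<omega>. \<Phi> (Xs 1 \<omega> - Xs 4 \<omega>) * \<Psi> (Ys 1 \<omega> - Ys 4 \<omega>) \<partial>M)
           - 2 * (\<integral>\<omega>. \<Phi> (Xs 1 \<omega> - Xs 2 \<omega>) * \<Psi> (Ys 1 \<omega> - Ys 3 \<omega>) \<partial>M)
           + (\<integral>\<omega>. \<Phi> (Xs 1 \<omega> - Xs 2 \<omega>) \<partial>M) * (\<integral>\<omega>. \<Psi> (Ys 3 \<omega> - Ys 4 \<omega>) \<partial>M)
       \<and> dcov2 \<mu> \<nu> M X Y =
           (\<integral>\<omega>. \<Phi> (Xs 1 \<omega> - Xs 4 \<omega>) *
               (\<Psi> (Ys 1 \<omega> - Ys 4 \<omega>) - 2 * \<Psi> (Ys 1 \<omega> - Ys 3 \<omega>) + \<Psi> (Ys 2 \<omega> - Ys 3 \<omega>)) \<partial>M)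
       \<and> dcov2 \<mu> \<nu> M X Y =
           (\<integral>\<omega>. (\<Phi> (Xs 1 \<omega> - Xs 4 \<omega>) - \<Phi> (Xs 4 \<omega> - Xs 2 \<omega>)) *
               (\<Psi> (Ys 4 \<omega> - Ys 1 \<omega>) - \<Psi> (Ys 1 \<omega> - Ys 3 \<omega>)) \<partial>M)
       \<and> dcov2 \<mu> \<nu> M X Y =
           (\<integral>\<omega>. (\<Phi> (Xs 1 \<omega> - Xs 4 \<omega>)
                   - real_cond_exp M (vimage_algebra (space M) (Xs 4) borel)
                       (\<lambda>\<omega>'. \<Phi> (Xs 4 \<omega>' - Xs 1 \<omega>')) \<omega>) *
               (\<Psi> (Ys 4 \<omega> - Ys 1 \<omega>)
                   - real_cond_exp M (vimage_algebra (space M) (Ys 1) borel)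
                       (\<lambda>\<omega>'. \<Psi> (Ys 1 \<omega>' - Ys 4 \<omega>')) \<omega>) \<partial>M)"
proof -
  interpret dcov_iid_sample M X Y Xs Ys \<mu> \<nu> \<Phi> \<Psi>
    by (rule dcov_iid_sample.intro[OF P], unfold_locales) (use assms in auto)
  show ?thesis
    using dcov2_eq_expectations dcov2_eq_integral_Phi_mult_Psi_combination
      dcov2_eq_integral_diff_mult_diff dcov2_eq_integral_cond_centered
    by blast
qed

end
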